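(* Let $n$ be a positive integer and let $l=n-1$. The $n\times n$ matrices $P_1,P_2,\dots,P_{(n-1)^2},C_1,C_2,\dots,C_n$ are linearly independent.
   Context: Numbering of positions: for an $l\times l$ matrix, the position $(i,j)$ is assigned the number $i+(j-i)l \pmod{l^2}$, taken in $\{1,\dots,l^2\}$ (residue $0$ is read as $l^2$). For each integer $1\le i\le l^2$, let $A_i\in M_l$ be the $(0,1)$-matrix whose entries are all $0$ except those in the positions numbered $i,i+1,\dots,i+l-2 \pmod{l^2}$, which are $1$ (so $A_i$ has at most one $1$ in each row and column, with one zero row and one zero column). For $1\le i\le (n-1)^2$, $P_i$ is the unique $n\times n$ permutation matrix such that deleting its first row and first column yields $A_i$. For $j\in[n]$, $C_j$ is the $n\times n$ $(0,1)$-matrix whose $j$-th column consists of all $1$'s and all other entries are $0$. *)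

theory Defs
  imports Complex_Main "HOL-Combinatorics.Permutations"
begin

text \<open>Matrices are represented as functions nat => nat => real with 1-based indices;
  an n x n matrix is intended to vanish outside {1..n} x {1..n}.\<close>

definition pos_num :: "nat \<Rightarrow> nat \<Rightarrow> nat \<Rightarrow> nat" where
  "pos_num l i j =
     (let r = nat ((int i + (int j - int i) * int l) mod int (l^2))
      in if r = 0 then l^2 else r)"

definition red_num :: "nat \<Rightarrow> nat \<Rightarrow> nat" where
  "red_num l k = (let r = k mod (l^2) in if r = 0 then l^2 else r)"

definition A_mat :: "nat \<Rightarrow> nat \<Rightarrow> nat \<Rightarrow> nat \<Rightarrow> real" where
  "A_mat l k i j =
     (if i \<in> {1..l} \<and> j \<in> {1..l} \<and>
         (\<exists>t. t + 2 \<le> l \<and> pos_num l i j = red_num l (k + t))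
      then 1 else 0)"

definition is_perm_matrix :: "nat \<Rightarrow> (nat \<Rightarrow> nat \<Rightarrow> real) \<Rightarrow> bool" where
  "is_perm_matrix n P \<longleftrightarrow>
     (\<exists>\<sigma>. \<sigma> permutes {1..n} \<and>
        (\<forall>i j. P i j = (if i \<in> {1..n} \<and> j \<in> {1..n} \<and> j = \<sigma> i then 1 else 0)))"

definition P_mat :: "nat \<Rightarrow> nat \<Rightarrow> nat \<Rightarrow> nat \<Rightarrow> real" where
  "P_mat n k = (THE P. is_perm_matrix n P \<and>
      (\<forall>i \<in> {1..n-1}. \<forall>j \<in> {1..n-1}. P (i+1) (j+1) = A_mat (n-1) k i j))"

definition C_mat :: "nat \<Rightarrow> nat \<Rightarrow> nat \<Rightarrow> nat \<Rightarrow> real" where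
  "C_mat n m i j = (if i \<in> {1..n} \<and> j = m then 1 else 0)"

end

(* Write l = n - 1. Every P_k is a permutation matrix, so its column sums are 1, and P_k(1,1) = 0
   because the lower-right block A_k has an empty row. Summing the relation over a column and
   reading it at position (1,1) therefore gives b = 0 and sum_k a_k = 0.

   The numbering i + (j - i) l is a bijection from the cells of the block onto Z/l^2, and A_k is
   the indicator of the window k, ..., k + l - 2 of numbers. What remains of the relation says that
   the l^2-periodic extension of a has vanishing sums over all windows of length l - 1. Hence it is
   also (l - 1)-periodic; since gcd(l - 1, l^2) = 1 it is constant, and the vanishing total makes it
   zero.

   That A_k is a partial permutation matrix with a single empty row, so that P_k exists, holds
   because two numbers of one window are at cyclic distance at most l - 2, whereas the numbers of
   two cells in one row differ by l d and those of two cells in one column by (l - 1) d,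
   with 0 < |d| < l. *)

theory Submission
  imports Defs "HOL-Number_Theory.Cong"
begin

section \<open>Residues\<close>

lemma cong_eq_if_dist_less:
  fixes a b m :: int
  assumes "[a = b] (mod m)" "\<bar>a - b\<bar> < m"
  shows "a = b"
proof (rule ccontr)
  assume "a \<noteq> b"
  moreover have "m dvd a - b" using assms(1) by (simp add: cong_iff_dvd_diff)
  ultimately have "\<bar>m\<bar> \<le> \<bar>a - b\<bar>" by (simp add: dvd_imp_le_int)
  with assms(2) show False by linarith
qed

definition residue_rep :: "nat \<Rightarrow> int \<Rightarrow> nat" where
  "residue_rep m x = nat ((x - 1) mod int m) + 1"

lemma residue_rep_mem: "0 < m \<Longrightarrow> residue_rep m x \<in> {1..m}"
  by (simp add: residue_rep_def nat_less_iff Suc_le_eq)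

lemma cong_residue_rep:
  assumes "0 < m"
  shows "[int (residue_rep m x) = x] (mod int m)"
proof -
  have "int (residue_rep m x) = (x - 1) mod int m + 1"
    using assms by (simp add: residue_rep_def)
  also have "[\<dots> = x - 1 + 1] (mod int m)"
    by (intro cong_add) simp_all
  finally show ?thesis by simp
qed

lemma residue_rep_unique:
  assumes "i \<in> {1..m}" "[int i = x] (mod int m)"
  shows "residue_rep m x = i"
proof -
  have "0 < m" using assms(1) by simp
  have "[int (residue_rep m x) = int i] (mod int m)"
    using cong_residue_rep[OF \<open>0 < m\<close>] assms(2) by (meson cong_sym cong_trans)
  then have "int (residue_rep m x) = int i"
    using residue_rep_mem[OF \<open>0 < m\<close>, of x] assms(1) by (intro cong_eq_if_dist_less) auto
  then show ?thesis by simp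
qed

lemma residue_rep_add_modulus [simp]: "residue_rep m (x + int m) = residue_rep m x"
proof -
  have "(x + int m - 1) mod int m = (x - 1) mod int m"
    by (metis add.commute add_diff_eq mod_add_self1)
  then show ?thesis by (simp add: residue_rep_def)
qed

lemma cong_window_gap:
  fixes p p' k L :: int and t t' w :: nat
  assumes "[p = k + int t] (mod L)" "[p' = k + int t'] (mod L)" "t \<le> w" "t' \<le> w"
    and "int w < p - p'" "p - p' + int w < L"
  shows False
proof -
  have "[p - p' = int t - int t'] (mod L)"
    using cong_diff[OF assms(1,2)] by simp
  then have "p - p' = int t - int t'"
    using assms(3-6) by (intro cong_eq_if_dist_less) auto
  with assms(3-5) show False by linarith
qed

section \<open>Periodic functions on the integers\<close>

lemma periodic_int_mult:
  fixes f :: "int \<Rightarrow> 'a"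
  assumes period: "\<And>y. f (y + d) = f y"
  shows "f (y + c * d) = f y"
proof (induction c rule: int_induct[where k = 0])
  case (step1 c)
  have "f (y + (c + 1) * d) = f ((y + c * d) + d)" by (simp add: distrib_right add.assoc)
  also have "\<dots> = f (y + c * d)" by (rule period)
  finally show ?case using step1 by simp
next
  case (step2 c)
  have "f (y + (c - 1) * d) = f ((y + (c - 1) * d) + d)" by (rule period[symmetric])
  also have "(y + (c - 1) * d) + d = y + c * d" by (simp add: algebra_simps)
  finally show ?case using step2 by simp
qed simp

lemma periodic_int_gcd:
  fixes f :: "int \<Rightarrow> 'a"
  assumes "\<And>y. f (y + d) = f y" "\<And>y. f (y + e) = f y"
  shows "f (y + gcd d e) = f y"
proof -
  obtain u v where "u * d + v * e = gcd d e" using bezout_int by blast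
  then have "f (y + gcd d e) = f ((y + u * d) + v * e)" by (simp add: add.assoc)
  also have "\<dots> = f (y + u * d)" by (rule periodic_int_mult[of f e, OF assms(2)])
  also have "\<dots> = f y" by (rule periodic_int_mult[of f d, OF assms(1)])
  finally show ?thesis .
qed

lemma window_sums_const_imp_periodic:
  fixes f :: "int \<Rightarrow> 'a::ab_group_add"
  assumes "\<And>y. (\<Sum>t<m. f (y - int t)) = s"
  shows "f (y + int m) = f y"
proof -
  have "f (y + int m) + s = (\<Sum>t<Suc m. f (y + int m - int t))"
    unfolding sum.lessThan_Suc_shift using assms[of "y + int m - 1"] by (simp add: algebra_simps)
  also have "\<dots> = s + f y"
    using assms[of "y + int m"] by simp
  finally show ?thesis by (simp add: add.commute)
qed

lemma sum_window_indicator: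
  fixes a :: "nat \<Rightarrow> real"
  assumes "m \<le> L"
  shows "(\<Sum>k=1..L. a k * of_bool (\<exists>t<m. [x = int k + int t] (mod int L)))
       = (\<Sum>t<m. a (residue_rep L (x - int t)))"
proof (cases "L = 0")
  case False
  then have "0 < L" by simp
  define r where "r t = residue_rep L (x - int t)" for t
  have cong_r: "[int (r t) = x - int t] (mod int L)" for t
    using cong_residue_rep[OF \<open>0 < L\<close>] by (simp add: r_def)
  have window: "{1..L} \<inter> {k. \<exists>t<m. [x = int k + int t] (mod int L)} = r ` {..<m}"
  proof (intro equalityI subsetI)
    fix k assume "k \<in> {1..L} \<inter> {k. \<exists>t<m. [x = int k + int t] (mod int L)}"
    then obtain t where "k \<in> {1..L}" "t < m" "[x = int k + int t] (mod int L)" by blast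
    then have "[int k = x - int t] (mod int L)"
      by (simp add: cong_iff_dvd_diff dvd_diff_commute algebra_simps)
    with \<open>k \<in> {1..L}\<close> have "k = r t" by (simp add: r_def residue_rep_unique)
    with \<open>t < m\<close> show "k \<in> r ` {..<m}" by blast
  next
    fix k assume "k \<in> r ` {..<m}"
    then obtain t where "t < m" "k = r t" by blast
    then have "[x = int k + int t] (mod int L)"
      using cong_r[of t] by (simp add: cong_iff_dvd_diff dvd_diff_commute algebra_simps)
    with \<open>t < m\<close> \<open>k = r t\<close> residue_rep_mem[OF \<open>0 < L\<close>]
    show "k \<in> {1..L} \<inter> {k. \<exists>t<m. [x = int k + int t] (mod int L)}"
      by (auto simp: r_def)
  qed
  have "inj_on r {..<m}"
  proof (rule inj_onI)
    fix t t' assume "t \<in> {..<m}" "t' \<in> {..<m}" "r t = r t'"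
    then have "[x - int t = x - int t'] (mod int L)"
      using cong_r[of t] cong_r[of t'] by (metis cong_sym cong_trans)
    then have "[int t' = int t] (mod int L)"
      by (simp add: cong_iff_dvd_diff dvd_diff_commute algebra_simps)
    then have "int t' = int t"
      using \<open>t \<in> {..<m}\<close> \<open>t' \<in> {..<m}\<close> assms by (intro cong_eq_if_dist_less) auto
    then show "t = t'" by simp
  qed
  have "(\<Sum>k=1..L. a k * of_bool (\<exists>t<m. [x = int k + int t] (mod int L)))
      = (\<Sum>k \<in> r ` {..<m}. a k)"
    using window by simp
  also have "\<dots> = (\<Sum>t<m. a (r t))"
    by (simp add: sum.reindex[OF \<open>inj_on r {..<m}\<close>])
  finally show ?thesis by (simp add: r_def)
qed (use assms in simp)

section \<open>Permutations and permutation matrices\<close>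

lemma permutes_of_functional_relation:
  assumes "finite A" "T \<subseteq> A \<times> A"
    and total: "\<And>i. i \<in> A \<Longrightarrow> \<exists>j. (i, j) \<in> T"
    and functional: "\<And>i j j'. (i, j) \<in> T \<Longrightarrow> (i, j') \<in> T \<Longrightarrow> j = j'"
    and injective: "\<And>i i' j. (i, j) \<in> T \<Longrightarrow> (i', j) \<in> T \<Longrightarrow> i = i'"
  obtains \<sigma> where "\<sigma> permutes A" "\<And>i j. i \<in> A \<Longrightarrow> (i, j) \<in> T \<longleftrightarrow> j = \<sigma> i"
proof -
  define \<sigma> where "\<sigma> i = (if i \<in> A then THE j. (i, j) \<in> T else i)" for i
  have graph: "(i, j) \<in> T \<longleftrightarrow> j = \<sigma> i" if "i \<in> A" for i j
  proof -
    have "\<exists>!j. (i, j) \<in> T" using total[OF that] functional by blast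
    then have "(i, \<sigma> i) \<in> T" using that theI'[of "\<lambda>j. (i, j) \<in> T"] by (simp add: \<sigma>_def)
    with functional show ?thesis by blast
  qed
  have "inj_on \<sigma> A" using graph injective by (metis inj_onI)
  moreover have "\<sigma> ` A \<subseteq> A" using graph assms(2) by blast
  ultimately have "bij_betw \<sigma> A A"
    using endo_inj_surj[OF assms(1)] by (simp add: bij_betw_def)
  then have "\<sigma> permutes A" by (rule bij_imp_permutes) (simp add: \<sigma>_def)
  then show ?thesis using graph by (rule that)
qed

lemma extend_partial_permutation:
  fixes S :: "(nat \<times> nat) set"
  assumes S: "S \<subseteq> {1..l} \<times> {1..l}"
    and functional: "\<And>i j j'. (i, j) \<in> S \<Longrightarrow> (i, j') \<in> S \<Longrightarrow> j = j'"
    and injective: "\<And>i i' j. (i, j) \<in> S \<Longrightarrow> (i', j) \<in> S \<Longrightarrow> i = i'"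
    and r: "r \<in> {1..l}" "\<And>j. (r, j) \<notin> S" "\<And>i. i \<in> {1..l} - {r} \<Longrightarrow> \<exists>j. (i, j) \<in> S"
  obtains \<sigma> where "\<sigma> permutes {1..Suc l}" "\<sigma> 1 \<noteq> 1"
    "\<And>i j. i \<in> {1..l} \<Longrightarrow> j \<in> {1..l} \<Longrightarrow> \<sigma> (Suc i) = Suc j \<longleftrightarrow> (i, j) \<in> S"
proof -
  have "finite S" using S finite_subset by blast
  have "card (snd ` S) = card S"
    using injective by (intro card_image inj_onI) auto
  also have "\<dots> = card (fst ` S)"
    using functional by (intro card_image[symmetric] inj_onI) auto
  also have "\<dots> \<le> card ({1..l} - {r})"
    using S r(2) by (intro card_mono) force+
  also have "\<dots> < card {1..l}" using r(1) by simp
  finally have "snd ` S \<noteq> {1..l}" by auto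
  then obtain c where c: "c \<in> {1..l}" "\<And>i. (i, c) \<notin> S"
    using S by force
  define T where "T = insert (1, Suc c) (insert (Suc r, 1) ((\<lambda>(i, j). (Suc i, Suc j)) ` S))"
  obtain \<sigma> where \<sigma>: "\<sigma> permutes {1..Suc l}" "\<And>i j. i \<in> {1..Suc l} \<Longrightarrow> (i, j) \<in> T \<longleftrightarrow> j = \<sigma> i"
  proof (rule permutes_of_functional_relation)
    show "T \<subseteq> {1..Suc l} \<times> {1..Suc l}" using S r(1) c(1) by (auto simp: T_def)
    show "\<exists>j. (i, j) \<in> T" if "i \<in> {1..Suc l}" for i
    proof (cases i)
      case (Suc i')
      with that r(3)[of i'] show ?thesis by (cases "i' = 0 \<or> i' = r") (auto simp: T_def)
    qed (use that in simp)
    show "j = j'" if "(i, j) \<in> T" "(i, j') \<in> T" for i j j'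
      using that S r functional by (auto simp: T_def)
    show "i = i'" if "(i, j) \<in> T" "(i', j) \<in> T" for i i' j
      using that S c injective by (auto simp: T_def)
  qed auto
  show ?thesis
  proof
    show "\<sigma> permutes {1..Suc l}" by (rule \<sigma>(1))
    show "\<sigma> 1 \<noteq> 1" using \<sigma>(2)[of 1 "Suc c"] c(1) by (auto simp: T_def)
    show "\<sigma> (Suc i) = Suc j \<longleftrightarrow> (i, j) \<in> S" if "i \<in> {1..l}" "j \<in> {1..l}" for i j
      using \<sigma>(2)[of "Suc i" "Suc j"] that by (auto simp: T_def)
  qed
qed

lemma permutes_eq_if_agree_off_point:
  assumes \<sigma>: "\<sigma> permutes A" and \<tau>: "\<tau> permutes A"
    and agree: "\<And>i j. i \<in> A - {a} \<Longrightarrow> j \<in> A - {a} \<Longrightarrow> \<sigma> i = j \<longleftrightarrow> \<tau> i = j"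
  shows "\<sigma> = \<tau>"
proof
  have off: "\<sigma> i = \<tau> i" if "i \<in> A - {a}" for i
    using agree[OF that, of "\<sigma> i"] agree[OF that, of "\<tau> i"] that
      permutes_in_image[OF \<sigma>] permutes_in_image[OF \<tau>]
    by (cases "\<sigma> i = a"; cases "\<tau> i = a") auto
  have at_a: "\<sigma> a = \<tau> a" if "a \<in> A"
  proof -
    have "\<sigma> a \<in> \<tau> ` A"
      using permutes_in_image[OF \<sigma>] permutes_image[OF \<tau>] that by simp
    then obtain x where "x \<in> A" "\<tau> x = \<sigma> a" by (metis imageE)
    moreover have "x = a"
    proof (rule ccontr)
      assume "x \<noteq> a"
      with \<open>x \<in> A\<close> off \<open>\<tau> x = \<sigma> a\<close> have "\<sigma> x = \<sigma> a" by simp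
      with \<open>x \<noteq> a\<close> show False using permutes_inj[OF \<sigma>] by (metis injD)
    qed
    ultimately show ?thesis by simp
  qed
  fix i
  show "\<sigma> i = \<tau> i"
    using off at_a permutes_not_in[OF \<sigma>] permutes_not_in[OF \<tau>] by (cases "i \<in> A") auto
qed

definition perm_matrix :: "nat \<Rightarrow> (nat \<Rightarrow> nat) \<Rightarrow> nat \<Rightarrow> nat \<Rightarrow> real" where
  "perm_matrix n \<sigma> i j = (if i \<in> {1..n} \<and> j \<in> {1..n} \<and> j = \<sigma> i then 1 else 0)"

lemma is_perm_matrix_iff:
  "is_perm_matrix n P \<longleftrightarrow> (\<exists>\<sigma>. \<sigma> permutes {1..n} \<and> P = perm_matrix n \<sigma>)"
  by (simp add: is_perm_matrix_def perm_matrix_def fun_eq_iff)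

lemma column_sum_perm_matrix:
  assumes "\<sigma> permutes {1..n}" "j \<in> {1..n}"
  shows "(\<Sum>i=1..n. perm_matrix n \<sigma> i j) = 1"
proof -
  have "(\<Sum>i=1..n. perm_matrix n \<sigma> i j) = (\<Sum>i=1..n. ((\<lambda>x. if x = j then 1 else 0) \<circ> \<sigma>) i)"
    using assms(2) by (intro sum.cong) (auto simp: perm_matrix_def)
  also have "\<dots> = (\<Sum>x=1..n. if x = j then 1 else 0)"
    by (rule sum.permute[OF assms(1), symmetric])
  also have "\<dots> = 1" using assms(2) by (simp add: sum.delta)
  finally show ?thesis .
qed

lemma perm_matrix_determined_by_block:
  assumes "\<sigma> permutes {1..Suc l}" "\<tau> permutes {1..Suc l}"
    and block: "\<And>i j. i \<in> {1..l} \<Longrightarrow> j \<in> {1..l} \<Longrightarrow>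
      perm_matrix (Suc l) \<sigma> (Suc i) (Suc j) = perm_matrix (Suc l) \<tau> (Suc i) (Suc j)"
  shows "\<sigma> = \<tau>"
proof (rule permutes_eq_if_agree_off_point[OF assms(1,2), where a = 1])
  fix i j assume "i \<in> {1..Suc l} - {1}" "j \<in> {1..Suc l} - {1}"
  then have "i = Suc (i - 1)" "j = Suc (j - 1)" "i - 1 \<in> {1..l}" "j - 1 \<in> {1..l}" by auto
  then show "\<sigma> i = j \<longleftrightarrow> \<tau> i = j"
    using block[of "i - 1" "j - 1"] by (auto simp: perm_matrix_def split: if_splits)
qed

section \<open>The cells of the lower-right block\<close>

definition cell_pos :: "nat \<Rightarrow> nat \<Rightarrow> nat \<Rightarrow> int" where
  "cell_pos l i j = int i + (int j - int i) * int l"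

lemma pos_num_eq_red_num_iff:
  assumes "l \<ge> 1"
  shows "pos_num l i j = red_num l x \<longleftrightarrow> [cell_pos l i j = int x] (mod int (l^2))"
proof -
  define M where "M = l^2"
  have "0 < M" using assms by (simp add: M_def)
  define wrap where "wrap r = (if r = 0 then M else r)" for r :: nat
  have wrap_inj: "wrap r = wrap s \<longleftrightarrow> r = s" if "r < M" "s < M" for r s
    using that by (auto simp: wrap_def)
  have "pos_num l i j = wrap (nat (cell_pos l i j mod int M))" "red_num l x = wrap (x mod M)"
    by (simp_all add: pos_num_def red_num_def cell_pos_def wrap_def M_def Let_def)
  then have "pos_num l i j = red_num l x \<longleftrightarrow> nat (cell_pos l i j mod int M) = x mod M"
    using \<open>0 < M\<close> by (simp add: wrap_inj nat_less_iff)
  also have "\<dots> \<longleftrightarrow> cell_pos l i j mod int M = int x mod int M"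
    using \<open>0 < M\<close> by (auto simp: nat_eq_iff zmod_int)
  finally show ?thesis by (simp add: cong_def M_def)
qed

lemma cell_pos_cong_row: "[cell_pos l i j = int i] (mod int l)"
  by (simp add: cell_pos_def cong_iff_dvd_diff)

lemma cell_exists_in_row:
  assumes "l \<ge> 1" "[x = int i] (mod int l)"
  obtains j where "j \<in> {1..l}" "[cell_pos l i j = x] (mod int (l^2))"
proof -
  obtain m where m: "x = int i + int l * m"
    using assms(2) by (metis cong_iff_dvd_diff dvdE diff_eq_eq add.commute)
  define j where "j = residue_rep l (int i + m)"
  have "j \<in> {1..l}" using residue_rep_mem[of l] assms(1) unfolding j_def by auto
  have "[int j = int i + m] (mod int l)"
    using cong_residue_rep[of l] assms(1) unfolding j_def by simp
  then obtain q where q: "int j - (int i + m) = int l * q"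
    by (auto simp: cong_iff_dvd_diff)
  have "cell_pos l i j - x = int (l^2) * q"
    using m q by (simp add: cell_pos_def power2_eq_square algebra_simps)
  then have "[cell_pos l i j = x] (mod int (l^2))"
    by (simp add: cong_iff_dvd_diff)
  with \<open>j \<in> {1..l}\<close> show ?thesis by (rule that)
qed

lemma cell_exists:
  assumes "l \<ge> 1"
  obtains i j where "i \<in> {1..l}" "j \<in> {1..l}" "[cell_pos l i j = x] (mod int (l^2))"
proof -
  have "[x = int (residue_rep l x)] (mod int l)"
    using cong_residue_rep assms by (simp add: cong_sym)
  then show ?thesis
    using that cell_exists_in_row[OF assms] residue_rep_mem assms by force
qed

definition A_support :: "nat \<Rightarrow> nat \<Rightarrow> (nat \<times> nat) set" where
  "A_support l k = {(i, j). i \<in> {1..l} \<and> j \<in> {1..l} \<and>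
     (\<exists>t. t + 2 \<le> l \<and> [cell_pos l i j = int k + int t] (mod int (l^2)))}"

lemma A_mat_eq_of_bool:
  assumes "l \<ge> 1"
  shows "A_mat l k i j = of_bool ((i, j) \<in> A_support l k)"
  using pos_num_eq_red_num_iff[OF assms] by (auto simp: A_mat_def A_support_def)

lemma A_support_subset: "A_support l k \<subseteq> {1..l} \<times> {1..l}"
  by (auto simp: A_support_def)

lemma A_support_gap:
  assumes "(i, j) \<in> A_support l k" "(i', j') \<in> A_support l k"
    and "int l - 2 < cell_pos l i j - cell_pos l i' j'"
    and "cell_pos l i j - cell_pos l i' j' + int l - 2 < int (l^2)"
  shows False
proof -
  obtain t t' where "t + 2 \<le> l" "[cell_pos l i j = int k + int t] (mod int (l^2))"
    and "t' + 2 \<le> l" "[cell_pos l i' j' = int k + int t'] (mod int (l^2))"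
    using assms(1,2) by (auto simp: A_support_def)
  then show False
    using assms(3,4) by (intro cong_window_gap[where w = "l - 2"]) auto
qed

lemma A_support_row_unique:
  assumes "(i, j) \<in> A_support l k" "(i, j') \<in> A_support l k"
  shows "j = j'"
proof -
  have False if "(i, j) \<in> A_support l k" "(i, j') \<in> A_support l k" "j' < j" for j j'
  proof -
    have "j \<le> l" "1 \<le> j'" using that(1,2) by (auto simp: A_support_def)
    have "int l \<le> (int j - int j') * int l"
      using mult_right_mono[of 1 "int j - int j'" "int l"] that(3) by simp
    moreover have "(int j - int j') * int l \<le> (int l - 1) * int l"
      using \<open>j \<le> l\<close> \<open>1 \<le> j'\<close> by (intro mult_right_mono) auto
    moreover have "cell_pos l i j - cell_pos l i j' = (int j - int j') * int l"
      by (simp add: cell_pos_def algebra_simps)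
    moreover have "(int l - 1) * int l = int (l^2) - int l"
      by (simp add: power2_eq_square algebra_simps)
    ultimately show False
      by (intro A_support_gap[OF that(1,2)]) linarith+
  qed
  with assms show ?thesis by (metis linorder_neqE_nat)
qed

lemma A_support_col_unique:
  assumes "(i, j) \<in> A_support l k" "(i', j) \<in> A_support l k"
  shows "i = i'"
proof -
  have False if "(i, j) \<in> A_support l k" "(i', j) \<in> A_support l k" "i < i'" for i i'
  proof -
    have "i' \<le> l" "1 \<le> i" "2 \<le> l" using that(1,2) by (auto simp: A_support_def)
    have "int l - 1 \<le> (int i' - int i) * (int l - 1)"
      using mult_right_mono[of 1 "int i' - int i" "int l - 1"] that(3) \<open>2 \<le> l\<close> by simp
    moreover have "(int i' - int i) * (int l - 1) \<le> (int l - 1) * (int l - 1)"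
      using \<open>i' \<le> l\<close> \<open>1 \<le> i\<close> \<open>2 \<le> l\<close> by (intro mult_right_mono) auto
    moreover have "cell_pos l i j - cell_pos l i' j = (int i' - int i) * (int l - 1)"
      by (simp add: cell_pos_def algebra_simps)
    moreover have "(int l - 1) * (int l - 1) = int (l^2) - 2 * int l + 1"
      by (simp add: power2_eq_square algebra_simps)
    ultimately show False
      by (intro A_support_gap[OF that(1,2)]) linarith+
  qed
  with assms show ?thesis by (metis linorder_neqE_nat)
qed

lemma A_support_row_cong:
  assumes "(i, j) \<in> A_support l k"
  obtains t where "t + 2 \<le> l" "[int i = int k + int t] (mod int l)"
proof -
  obtain t where t: "t + 2 \<le> l" "[cell_pos l i j = int k + int t] (mod int (l^2))"
    using assms unfolding A_support_def by blast
  have "[cell_pos l i j = int k + int t] (mod int l)"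
    using t(2) by (rule cong_dvd_modulus) (simp add: power2_eq_square)
  with cell_pos_cong_row have "[int i = int k + int t] (mod int l)"
    by (meson cong_sym cong_trans)
  with t(1) show ?thesis by (rule that)
qed

lemma A_support_row_nonempty:
  assumes "l \<ge> 1" "i \<in> {1..l}" "t + 2 \<le> l" "[int i = int k + int t] (mod int l)"
  shows "\<exists>j. (i, j) \<in> A_support l k"
proof -
  obtain j where "j \<in> {1..l}" "[cell_pos l i j = int k + int t] (mod int (l^2))"
    using cell_exists_in_row[OF assms(1) cong_sym[OF assms(4)]] by blast
  with assms(2,3) show ?thesis by (auto simp: A_support_def)
qed

lemma A_support_empty_row:
  assumes "l \<ge> 1"
  obtains r where "r \<in> {1..l}" "\<And>j. (r, j) \<notin> A_support l k"
    and "\<And>i. i \<in> {1..l} - {r} \<Longrightarrow> \<exists>j. (i, j) \<in> A_support l k"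
proof -
  have "0 < l" using assms by simp
  define r where "r = residue_rep l (int k + int l - 1)"
  have r: "r \<in> {1..l}" "[int r = int k + int l - 1] (mod int l)"
    unfolding r_def using residue_rep_mem cong_residue_rep \<open>0 < l\<close> by blast+
  have "(r, j) \<notin> A_support l k" for j
  proof
    assume "(r, j) \<in> A_support l k"
    then obtain t where t: "t + 2 \<le> l" "[int r = int k + int t] (mod int l)"
      by (rule A_support_row_cong)
    then have "[int k + int l - 1 = int k + int t] (mod int l)"
      using r(2) by (meson cong_sym cong_trans)
    then have "int k + int l - 1 = int k + int t"
      using t(1) by (intro cong_eq_if_dist_less) auto
    with t(1) show False by linarith
  qed
  moreover have "\<exists>j. (i, j) \<in> A_support l k" if i: "i \<in> {1..l} - {r}" for i
  proof -
    define t where "t = nat ((int i - int k) mod int l)"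
    have "t < l" using \<open>0 < l\<close> by (simp add: t_def nat_less_iff)
    have t_cong: "[int i = int k + int t] (mod int l)"
      using \<open>0 < l\<close> by (simp add: t_def cong_def mod_add_right_eq)
    have "t \<noteq> l - 1"
    proof
      assume "t = l - 1"
      then have "[int i = int k + int l - 1] (mod int l)"
        using t_cong \<open>0 < l\<close> by (simp add: of_nat_diff add_diff_eq)
      then have "[int i = int r] (mod int l)"
        using r(2) cong_sym cong_trans by blast
      then have "int i = int r" using i r(1) by (intro cong_eq_if_dist_less) auto
      with i show False by simp
    qed
    with \<open>t < l\<close> have "t + 2 \<le> l" by simp
    with assms i t_cong show ?thesis by (intro A_support_row_nonempty) auto
  qed
  ultimately show ?thesis using that r(1) by blast
qed

section \<open>The matrices P_k\<close>

lemma P_mat_spec: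
  assumes "n \<ge> 2"
  obtains \<sigma> where "\<sigma> permutes {1..n}" "\<sigma> 1 \<noteq> 1" "P_mat n k = perm_matrix n \<sigma>"
    "\<And>i j. i \<in> {1..n-1} \<Longrightarrow> j \<in> {1..n-1} \<Longrightarrow> P_mat n k (Suc i) (Suc j) = A_mat (n-1) k i j"
proof -
  define l where "l = n - 1"
  have "l \<ge> 1" "n = Suc l" using assms by (simp_all add: l_def)
  obtain r where r: "r \<in> {1..l}" "\<And>j. (r, j) \<notin> A_support l k"
    "\<And>i. i \<in> {1..l} - {r} \<Longrightarrow> \<exists>j. (i, j) \<in> A_support l k"
    using A_support_empty_row[OF \<open>l \<ge> 1\<close>] by blast
  obtain \<sigma> where \<sigma>: "\<sigma> permutes {1..n}" "\<sigma> 1 \<noteq> 1"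
    "\<And>i j. i \<in> {1..l} \<Longrightarrow> j \<in> {1..l} \<Longrightarrow> \<sigma> (Suc i) = Suc j \<longleftrightarrow> (i, j) \<in> A_support l k"
    unfolding \<open>n = Suc l\<close>
    by (rule extend_partial_permutation[of "A_support l k" l r])
      (use A_support_subset A_support_row_unique A_support_col_unique r in blast)+
  have block: "perm_matrix n \<sigma> (Suc i) (Suc j) = A_mat l k i j" if "i \<in> {1..l}" "j \<in> {1..l}" for i j
    using that \<sigma>(3)[OF that] by (auto simp: perm_matrix_def A_mat_eq_of_bool[OF \<open>l \<ge> 1\<close>] \<open>n = Suc l\<close>)
  have "P_mat n k = perm_matrix n \<sigma>"
    unfolding P_mat_def
  proof (rule the_equality)
    show "is_perm_matrix n (perm_matrix n \<sigma>) \<and>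
        (\<forall>i\<in>{1..n-1}. \<forall>j\<in>{1..n-1}. perm_matrix n \<sigma> (i+1) (j+1) = A_mat (n-1) k i j)"
      using \<sigma>(1) block by (auto simp: is_perm_matrix_iff l_def)
  next
    fix P
    assume "is_perm_matrix n P \<and> (\<forall>i\<in>{1..n-1}. \<forall>j\<in>{1..n-1}. P (i+1) (j+1) = A_mat (n-1) k i j)"
    then obtain \<tau> where \<tau>: "\<tau> permutes {1..n}" "P = perm_matrix n \<tau>"
      and block_\<tau>: "\<And>i j. i \<in> {1..l} \<Longrightarrow> j \<in> {1..l} \<Longrightarrow> P (Suc i) (Suc j) = A_mat l k i j"
      by (auto simp: is_perm_matrix_iff l_def)
    have "\<tau> = \<sigma>"
      using \<tau>(1) \<sigma>(1) unfolding \<open>n = Suc l\<close>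
    proof (rule perm_matrix_determined_by_block)
      fix i j assume "i \<in> {1..l}" "j \<in> {1..l}"
      then show "perm_matrix (Suc l) \<tau> (Suc i) (Suc j) = perm_matrix (Suc l) \<sigma> (Suc i) (Suc j)"
        using block_\<tau>[of i j] block[of i j] \<tau>(2) \<open>n = Suc l\<close> by simp
    qed
    with \<tau>(2) show "P = perm_matrix n \<sigma>" by simp
  qed
  with \<sigma>(1,2) block show ?thesis by (intro that) (auto simp: l_def)
qed

lemma P_mat_column_sum:
  assumes "n \<ge> 2" "j \<in> {1..n}"
  shows "(\<Sum>i=1..n. P_mat n k i j) = 1"
proof -
  obtain \<sigma> where \<sigma>: "\<sigma> permutes {1..n}" "P_mat n k = perm_matrix n \<sigma>"
    using P_mat_spec[OF assms(1), where k = k] by metis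
  show ?thesis using column_sum_perm_matrix[OF \<sigma>(1) assms(2)] \<sigma>(2) by simp
qed

lemma P_mat_1_1:
  assumes "n \<ge> 2"
  shows "P_mat n k 1 1 = 0"
proof -
  obtain \<sigma> where "\<sigma> 1 \<noteq> 1" "P_mat n k = perm_matrix n \<sigma>"
    using P_mat_spec[OF assms, where k = k] by metis
  then show ?thesis by (simp add: perm_matrix_def)
qed

lemma P_mat_block:
  assumes "n \<ge> 2" "i \<in> {1..n-1}" "j \<in> {1..n-1}"
  shows "P_mat n k (Suc i) (Suc j) = A_mat (n-1) k i j"
  using P_mat_spec[OF assms(1), where k = k] assms(2,3) by metis

lemma C_mat_combination:
  "(\<Sum>m=1..n. b m * C_mat n m i j) = (if i \<in> {1..n} \<and> j \<in> {1..n} then b j else 0)"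
proof -
  have "(\<Sum>m=1..n. b m * C_mat n m i j) = (\<Sum>m=1..n. if m = j then (if i \<in> {1..n} then b m else 0) else 0)"
    by (rule sum.cong) (auto simp: C_mat_def)
  then show ?thesis by (simp add: sum.delta)
qed

lemma column_sum_combination:
  fixes a b :: "nat \<Rightarrow> real"
  assumes "n \<ge> 2" "j \<in> {1..n}"
  shows "(\<Sum>i=1..n. (\<Sum>k=1..(n-1)^2. a k * P_mat n k i j) + (\<Sum>m=1..n. b m * C_mat n m i j))
       = (\<Sum>k=1..(n-1)^2. a k) + real n * b j"
proof -
  have "(\<Sum>i=1..n. \<Sum>k=1..(n-1)^2. a k * P_mat n k i j) = (\<Sum>k=1..(n-1)^2. a k * (\<Sum>i=1..n. P_mat n k i j))"
    by (subst sum.swap) (simp add: sum_distrib_left)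
  also have "\<dots> = (\<Sum>k=1..(n-1)^2. a k)"
    using P_mat_column_sum[OF assms] by simp
  moreover have "(\<Sum>i=1..n. \<Sum>m=1..n. b m * C_mat n m i j) = real n * b j"
    using assms(2) C_mat_combination[of b n] by simp
  ultimately show ?thesis by (simp add: sum.distrib)
qed

section \<open>Linear independence\<close>

lemma A_mat_combination_window_sum:
  fixes a :: "nat \<Rightarrow> real"
  assumes "l \<ge> 1"
    and block: "\<And>i j. i \<in> {1..l} \<Longrightarrow> j \<in> {1..l} \<Longrightarrow> (\<Sum>k=1..l^2. a k * A_mat l k i j) = 0"
  shows "(\<Sum>t<l - 1. a (residue_rep (l^2) (x - int t))) = 0"
proof -
  define L where "L = l^2"
  obtain i j where ij: "i \<in> {1..l}" "j \<in> {1..l}" "[cell_pos l i j = x] (mod int L)"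
    using cell_exists[OF assms(1), of x] unfolding L_def by blast
  have "[cell_pos l i j = c] (mod int L) \<longleftrightarrow> [x = c] (mod int L)" for c
    using ij(3) by (meson cong_sym cong_trans)
  moreover have "Suc (Suc t) \<le> l \<longleftrightarrow> t < l - 1" for t by arith
  ultimately have "(i, j) \<in> A_support l k \<longleftrightarrow> (\<exists>t<l - 1. [x = int k + int t] (mod int L))" for k
    using ij(1,2) by (simp add: A_support_def L_def)
  then have "0 = (\<Sum>k=1..L. a k * of_bool (\<exists>t<l - 1. [x = int k + int t] (mod int L)))"
    using block[OF ij(1,2)] by (simp add: A_mat_eq_of_bool[OF assms(1)] L_def)
  also have "\<dots> = (\<Sum>t<l - 1. a (residue_rep L (x - int t)))"
    unfolding L_def power2_eq_square
    by (rule sum_window_indicator) (meson diff_le_self le_square order_trans)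
  finally show ?thesis by (simp add: L_def)
qed

lemma A_mat_combination_eq_0:
  fixes a :: "nat \<Rightarrow> real"
  assumes block: "\<And>i j. i \<in> {1..l} \<Longrightarrow> j \<in> {1..l} \<Longrightarrow> (\<Sum>k=1..l^2. a k * A_mat l k i j) = 0"
    and total: "(\<Sum>k=1..l^2. a k) = 0"
    and k: "k \<in> {1..l^2}"
  shows "a k = 0"
proof -
  have "l \<ge> 1" using k by (cases l) auto
  define L where "L = l^2"
  have "0 < L" using \<open>l \<ge> 1\<close> by (simp add: L_def)
  define \<alpha> where "\<alpha> y = a (residue_rep L y)" for y
  have period_l1: "\<alpha> (y + int (l - 1)) = \<alpha> y" for y
    using A_mat_combination_window_sum[OF \<open>l \<ge> 1\<close> block]
    by (intro window_sums_const_imp_periodic) (simp add: \<alpha>_def L_def)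
  have period_L: "\<alpha> (y + int L) = \<alpha> y" for y
    by (simp add: \<alpha>_def)
  have "coprime (l - 1) L"
    using \<open>l \<ge> 1\<close> coprime_Suc_right_nat[of "l - 1"] by (simp add: L_def coprime_power_right_iff)
  then have "gcd (int (l - 1)) (int L) = 1"
    by (simp add: coprime_int_iff coprime_iff_gcd_eq_1[symmetric])
  then have "\<alpha> (y + 1) = \<alpha> y" for y
    using periodic_int_gcd[OF period_l1 period_L] by metis
  then have const: "\<alpha> y = \<alpha> 0" for y
    using periodic_int_mult[of \<alpha> 1 0 y] by simp
  have a_eq: "a k' = \<alpha> 0" if "k' \<in> {1..L}" for k'
    using that const[of "int k'"] by (simp add: \<alpha>_def residue_rep_unique)
  have "real L * \<alpha> 0 = 0"
    using total a_eq by (simp add: L_def)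
  with \<open>0 < L\<close> have "\<alpha> 0 = 0" by simp
  with a_eq k show ?thesis by (simp add: L_def)
qed

lemma combination_eq_0_imp_C_coefficients_eq_0:
  fixes a b :: "nat \<Rightarrow> real"
  assumes "n \<ge> 2"
    and H: "\<And>i j. i \<in> {1..n} \<Longrightarrow> j \<in> {1..n} \<Longrightarrow>
      (\<Sum>k = 1..(n-1)^2. a k * P_mat n k i j) + (\<Sum>m = 1..n. b m * C_mat n m i j) = 0"
  shows "(\<Sum>k=1..(n-1)^2. a k) = 0" "\<forall>m \<in> {1..n}. b m = 0"
proof -
  have "(\<Sum>k = 1..(n-1)^2. a k * P_mat n k 1 1) = 0"
    using P_mat_1_1[OF assms(1)] by simp
  with H[of 1 1] C_mat_combination[of b n 1 1] assms(1) have "b 1 = 0" by simp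
  have column: "(\<Sum>k=1..(n-1)^2. a k) + real n * b j = 0" if "j \<in> {1..n}" for j
    using column_sum_combination[OF assms(1) that, of a b] H that by simp
  show sum_a: "(\<Sum>k=1..(n-1)^2. a k) = 0"
    using column[of 1] \<open>b 1 = 0\<close> assms(1) by simp
  show "\<forall>m \<in> {1..n}. b m = 0"
    using column sum_a assms(1) by simp
qed

theorem mainTheorem5:
  fixes n :: nat
  assumes "n \<ge> 1"
  shows "\<forall>(a :: nat \<Rightarrow> real) (b :: nat \<Rightarrow> real).
           (\<forall>i \<in> {1..n}. \<forall>j \<in> {1..n}.
              (\<Sum>k = 1..(n-1)^2. a k * P_mat n k i j) + (\<Sum>m = 1..n. b m * C_mat n m i j) = 0)
           \<longrightarrow> (\<forall>k \<in> {1..(n-1)^2}. a k = 0) \<and> (\<forall>m \<in> {1..n}. b m = 0)"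
proof (intro allI impI)
  fix a b :: "nat \<Rightarrow> real"
  assume H: "\<forall>i \<in> {1..n}. \<forall>j \<in> {1..n}.
    (\<Sum>k = 1..(n-1)^2. a k * P_mat n k i j) + (\<Sum>m = 1..n. b m * C_mat n m i j) = 0"
  show "(\<forall>k \<in> {1..(n-1)^2}. a k = 0) \<and> (\<forall>m \<in> {1..n}. b m = 0)"
  proof (cases "n = 1")
    case True
    with H show ?thesis by (simp add: C_mat_def)
  next
    case False
    with assms have "n \<ge> 2" by simp
    note H' = combination_eq_0_imp_C_coefficients_eq_0[OF \<open>n \<ge> 2\<close>, of a b]
    have sum_a: "(\<Sum>k=1..(n-1)^2. a k) = 0" and b: "\<forall>m \<in> {1..n}. b m = 0"
      using H' H by blast+
    have "(\<Sum>k=1..(n-1)^2. a k * A_mat (n-1) k i j) = 0" if "i \<in> {1..n-1}" "j \<in> {1..n-1}" for i j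
      using H[rule_format, of "Suc i" "Suc j"] C_mat_combination[of b n "Suc i" "Suc j"] that b
      by (auto simp: P_mat_block[OF \<open>n \<ge> 2\<close> that])
    with sum_a have "\<forall>k \<in> {1..(n-1)^2}. a k = 0"
      using A_mat_combination_eq_0 by blast
    with b show ?thesis by blast
  qed
qed

end
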